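(* Let $f\in\mathbb{R}[x_1,\dots,x_n]$ be a homogeneous polynomial of degree $d$, let $A=A(f)=\bigoplus_{i=0}^d A_i$, let $k$ be an integer with $0\le k\le \lfloor d/2\rfloor$, let $B_k=\{\alpha_1,\dots,\alpha_m\}$ be homogeneous elements of degree $k$ of $Q$ whose images form an $\mathbb{R}$-basis of $A_k$, and let $\bm F=(F_1,\dots,F_m)^{\mathrm T}\in\mathbb{R}[x_1,\dots,x_n]^m$ satisfy $\bm H_{B_k}(f)\,\bm F=\bm 0$. Then: (1) For every $(a_1,\dots,a_n)\in\mathbb{R}^n$, setting $\ell=a_1\partial_1+\dots+a_n\partial_n\in A_1$ and $\xi=\sum_{i=1}^m F_i(a_1,\dots,a_n)\,\alpha_i\in A_k$, the element $\xi$ lies in the kernel of the multiplication map $\times\ell^{d-2k}\colon A_k\to A_{d-k}$. (2) $\sum_{i=1}^m F_i\cdot(\alpha_i f)=0$ as a polynomial in $\mathbb{R}[x_1,\dots,x_n]$.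
   Context: Let $Q=\mathbb{R}[\partial_1,\dots,\partial_n]$ with $\partial_i=\partial/\partial x_i$, acting on $\mathbb{R}[x_1,\dots,x_n]$ by differentiation. For a homogeneous polynomial $f$ of degree $d$, $\operatorname{Ann}_Q(f)=\{\alpha\in Q\mid \alpha f=0\}$ and $A(f)=Q/\operatorname{Ann}_Q(f)$, a graded Artinian Gorenstein algebra with graded pieces $A_i$, $i=0,\dots,d$. For a set $B_k=\{\alpha_1,\dots,\alpha_m\}$ of homogeneous elements of degree $k$ of $Q$ and a polynomial $g$, the $k$-th Hessian matrix $\bm H_{B_k}(g)$ is the $m\times m$ polynomial matrix with $(i,j)$-entry $(\alpha_i\alpha_j)g$. *)

theory Defs
  imports "HOL-Analysis.Analysis" "HOL-Library.Poly_Mapping"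
begin

(* The same type represents both R[x_1..x_n] and Q = R[d_1..d_n]
  (variable i stands for x_(i+1), resp. d_(i+1)). *)
type_synonym mpoly = "(nat \<Rightarrow>\<^sub>0 nat) \<Rightarrow>\<^sub>0 real"

definition mdeg :: "(nat \<Rightarrow>\<^sub>0 nat) \<Rightarrow> nat" where
  "mdeg m = (\<Sum>i\<in>Poly_Mapping.keys m. Poly_Mapping.lookup m i)"

definition in_vars :: "nat \<Rightarrow> mpoly \<Rightarrow> bool" where
  "in_vars n p \<longleftrightarrow> (\<forall>m\<in>Poly_Mapping.keys p. Poly_Mapping.keys m \<subseteq> {..<n})"

definition homog :: "nat \<Rightarrow> mpoly \<Rightarrow> bool" where
  "homog d p \<longleftrightarrow> (\<forall>m\<in>Poly_Mapping.keys p. mdeg m = d)"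

(* The action of a differential monomial d^b on a monomial x^g:
  d^b x^g = (prod_i g_i!/(g_i-b_i)!) x^(g-b) if b \<le> g, else 0. *)
definition dmono :: "(nat \<Rightarrow>\<^sub>0 nat) \<Rightarrow> (nat \<Rightarrow>\<^sub>0 nat) \<Rightarrow> mpoly" where
  "dmono b g = (if (\<forall>i. Poly_Mapping.lookup b i \<le> Poly_Mapping.lookup g i)
     then Poly_Mapping.single (g - b) (\<Prod>i\<in>Poly_Mapping.keys b. real (fact (Poly_Mapping.lookup g i)) / real (fact (Poly_Mapping.lookup g i - Poly_Mapping.lookup b i)))
     else 0)"

definition dact :: "mpoly \<Rightarrow> mpoly \<Rightarrow> mpoly" where
  "dact \<alpha> g = (\<Sum>b\<in>Poly_Mapping.keys \<alpha>. \<Sum>c\<in>Poly_Mapping.keys g. Poly_Mapping.single 0 (Poly_Mapping.lookup \<alpha> b * Poly_Mapping.lookup g c) * dmono b c)"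

definition eval_mp :: "(nat \<Rightarrow> real) \<Rightarrow> mpoly \<Rightarrow> real" where
  "eval_mp a p = (\<Sum>g\<in>Poly_Mapping.keys p. Poly_Mapping.lookup p g * (\<Prod>i\<in>Poly_Mapping.keys g. a i ^ Poly_Mapping.lookup g i))"

end

theory Submission
  imports Defs
begin

text \<open>
  Write \<open>\<ell> = a\<^sub>1\<partial>\<^sub>1 + \<dots> + a\<^sub>n\<partial>\<^sub>n\<close> and \<open>e = d - 2k\<close>. By Euler's identity, \<open>\<ell>\<^sup>e\<close> applied to a form
  \<open>h\<close> of degree \<open>e\<close> is the constant \<open>e! h(a)\<close>. For (1), the form \<open>g = (\<xi> \<ell>\<^sup>e) f\<close> has degree \<open>k\<close>,
  so it vanishes once every \<open>\<beta> g\<close> with \<open>deg \<beta> = k\<close> does; and \<open>\<beta> g = e! ((\<beta> \<xi>) f)(a)\<close>, which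
  is zero because \<open>\<beta>\<close> is a combination of the \<open>\<alpha>\<^sub>i\<close> modulo \<open>Ann(f)\<close> and
  \<open>((\<alpha>\<^sub>i \<xi>) f)(a)\<close> is the \<open>i\<close>-th entry of \<open>H(f) F\<close> at \<open>a\<close>. For (2), the value of
  \<open>\<Sum> F\<^sub>i (\<alpha>\<^sub>i f)\<close> at \<open>a\<close> is \<open>(\<xi> f)(a) = (\<ell>\<^sup>k (\<xi> \<ell>\<^sup>e) f) / (d - k)!\<close>, which is zero by (1);
  a polynomial vanishing everywhere is zero.
\<close>

section \<open>Differential operators acting on polynomials\<close>

lemma lookup_smult: "Poly_Mapping.lookup (Poly_Mapping.single 0 r * (p::mpoly)) k = r * Poly_Mapping.lookup p k"
  by (simp add: mult_map_scale_conv_mult[symmetric] map.rep_eq when_def)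

lemma keys_smult: "Poly_Mapping.keys (Poly_Mapping.single 0 r * (p::mpoly)) \<subseteq> Poly_Mapping.keys p"
  by (auto simp: in_keys_iff lookup_smult)

lemma smult_smult: "Poly_Mapping.single 0 r * (Poly_Mapping.single 0 s * (p::mpoly)) = Poly_Mapping.single 0 (r * s) * p"
  by (simp add: mult.assoc[symmetric] mult_single)

lemma mpoly_eq_sum_single: "(p::mpoly) = (\<Sum>c\<in>Poly_Mapping.keys p. Poly_Mapping.single c (Poly_Mapping.lookup p c))"
  by (rule poly_mapping_eqI) (simp add: lookup_sum lookup_single when_def in_keys_iff)

lemma mpoly_induct[case_names zero single add]:
  assumes "P 0" "\<And>c v. P (Poly_Mapping.single c v)" "\<And>p q. P p \<Longrightarrow> P q \<Longrightarrow> P (p + q)"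
  shows "P (p::mpoly)"
proof -
  have "P (\<Sum>c\<in>S. Poly_Mapping.single c (Poly_Mapping.lookup p c))" if "finite S" for S
    using that by (induction S rule: finite_induct) (auto intro: assms)
  then show ?thesis using mpoly_eq_sum_single[of p] by (metis finite_keys)
qed

lemma dact_eq_sum_superset:
  assumes "finite B" "Poly_Mapping.keys \<alpha> \<subseteq> B" "finite C" "Poly_Mapping.keys g \<subseteq> C"
  shows "dact \<alpha> g = (\<Sum>b\<in>B. \<Sum>c\<in>C. Poly_Mapping.single 0 (Poly_Mapping.lookup \<alpha> b * Poly_Mapping.lookup g c) * dmono b c)"
proof -
  have "dact \<alpha> g = (\<Sum>b\<in>B. \<Sum>c\<in>Poly_Mapping.keys g. Poly_Mapping.single 0 (Poly_Mapping.lookup \<alpha> b * Poly_Mapping.lookup g c) * dmono b c)"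
    unfolding dact_def by (rule sum.mono_neutral_left) (auto simp: assms in_keys_iff)
  also have "\<dots> = (\<Sum>b\<in>B. \<Sum>c\<in>C. Poly_Mapping.single 0 (Poly_Mapping.lookup \<alpha> b * Poly_Mapping.lookup g c) * dmono b c)"
    by (rule sum.cong[OF refl], rule sum.mono_neutral_left) (auto simp: assms in_keys_iff)
  finally show ?thesis .
qed

lemma dact_zero_left[simp]: "dact 0 g = 0"
  by (simp add: dact_def)

lemma dact_zero_right[simp]: "dact \<alpha> 0 = 0"
  by (simp add: dact_def)

lemma dact_add_left: "dact (\<alpha> + \<beta>) g = dact \<alpha> g + dact \<beta> g"
  by (subst (1 2 3) dact_eq_sum_superset[where B="Poly_Mapping.keys \<alpha> \<union> Poly_Mapping.keys \<beta> \<union> Poly_Mapping.keys (\<alpha> + \<beta>)"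
        and C="Poly_Mapping.keys g"])
     (auto simp: lookup_add distrib_right single_add sum.distrib)

lemma dact_add_right: "dact \<alpha> (g + h) = dact \<alpha> g + dact \<alpha> h"
  by (subst (1 2 3) dact_eq_sum_superset[where C="Poly_Mapping.keys g \<union> Poly_Mapping.keys h \<union> Poly_Mapping.keys (g + h)"
        and B="Poly_Mapping.keys \<alpha>"])
     (auto simp: lookup_add distrib_right distrib_left single_add sum.distrib)

lemma dact_smult_left: "dact (Poly_Mapping.single 0 r * \<alpha>) g = Poly_Mapping.single 0 r * dact \<alpha> g"
  by (subst (1 2) dact_eq_sum_superset[where B="Poly_Mapping.keys \<alpha>" and C="Poly_Mapping.keys g"])
     (auto simp: lookup_smult in_keys_iff sum_distrib_left smult_smult mult.assoc)

lemma dact_smult_right: "dact \<alpha> (Poly_Mapping.single 0 r * g) = Poly_Mapping.single 0 r * dact \<alpha> g"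
  by (subst (1 2) dact_eq_sum_superset[where B="Poly_Mapping.keys \<alpha>" and C="Poly_Mapping.keys g"])
     (auto simp: lookup_smult in_keys_iff sum_distrib_left smult_smult mult.assoc mult.left_commute)

lemma dact_sum_left: "dact (\<Sum>i\<in>I. A i) g = (\<Sum>i\<in>I. dact (A i) g)"
  by (induction I rule: infinite_finite_induct) (auto simp: dact_add_left)

lemma dact_sum_right: "dact \<alpha> (\<Sum>i\<in>I. A i) = (\<Sum>i\<in>I. dact \<alpha> (A i))"
  by (induction I rule: infinite_finite_induct) (auto simp: dact_add_right)

lemma dact_diff_left: "dact (\<alpha> - \<beta>) g = dact \<alpha> g - dact \<beta> g"
  by (metis add_diff_cancel_right' dact_add_left diff_add_cancel)

lemma dact_single_single:
  "dact (Poly_Mapping.single b u) (Poly_Mapping.single c v) = Poly_Mapping.single 0 (u * v) * dmono b c"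
  by (subst dact_eq_sum_superset[where B="{b}" and C="{c}"]) auto

lemma dmono_not_le: "\<not> (\<forall>i. Poly_Mapping.lookup b i \<le> Poly_Mapping.lookup c i) \<Longrightarrow> dmono b c = 0"
  unfolding dmono_def by auto

lemma prod_fact_ratio_superset:
  assumes "finite S" "Poly_Mapping.keys b \<subseteq> S"
  shows "(\<Prod>i\<in>Poly_Mapping.keys b. real (fact (Poly_Mapping.lookup g i)) / real (fact (Poly_Mapping.lookup g i - Poly_Mapping.lookup b i)))
       = (\<Prod>i\<in>S. real (fact (Poly_Mapping.lookup g i)) / real (fact (Poly_Mapping.lookup g i - Poly_Mapping.lookup b i)))"
  by (rule prod.mono_neutral_left) (auto simp: assms in_keys_iff)

lemma dact_single_dmono: "dact (Poly_Mapping.single b1 1) (dmono b2 c) = dmono (b1 + b2) c"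
proof (cases "\<forall>i. Poly_Mapping.lookup b1 i + Poly_Mapping.lookup b2 i \<le> Poly_Mapping.lookup c i")
  case False
  have "dmono (b1 + b2) c = 0"
    using False by (intro dmono_not_le) (simp add: lookup_add)
  moreover have "dact (Poly_Mapping.single b1 1) (dmono b2 c) = 0"
  proof (cases "\<forall>i. Poly_Mapping.lookup b2 i \<le> Poly_Mapping.lookup c i")
    case True
    then have "\<not> (\<forall>i. Poly_Mapping.lookup b1 i \<le> Poly_Mapping.lookup (c - b2) i)"
      using False by (auto simp: lookup_minus le_diff_conv2)
    then show ?thesis
      using True by (simp add: dmono_def[of b2] dact_single_single dmono_not_le)
  qed (simp add: dmono_not_le)
  ultimately show ?thesis by simp
next
  case True
  then have le1: "\<forall>i. Poly_Mapping.lookup b1 i \<le> Poly_Mapping.lookup (c - b2) i"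
    and le2: "\<forall>i. Poly_Mapping.lookup b2 i \<le> Poly_Mapping.lookup c i"
    and le12: "\<forall>i. Poly_Mapping.lookup (b1 + b2) i \<le> Poly_Mapping.lookup c i"
    by (auto simp: lookup_minus lookup_add intro: add_le_imp_le_diff add_leD2)
  have "c - b2 - b1 = c - (b1 + b2)"
    by (rule poly_mapping_eqI) (simp add: lookup_add lookup_minus)
  moreover
  let ?S = "Poly_Mapping.keys b1 \<union> Poly_Mapping.keys b2"
  have "(\<Prod>i\<in>Poly_Mapping.keys b2. real (fact (Poly_Mapping.lookup c i)) / real (fact (Poly_Mapping.lookup c i - Poly_Mapping.lookup b2 i)))
      * (\<Prod>i\<in>Poly_Mapping.keys b1. real (fact (Poly_Mapping.lookup (c - b2) i)) / real (fact (Poly_Mapping.lookup (c - b2) i - Poly_Mapping.lookup b1 i)))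
      = (\<Prod>i\<in>Poly_Mapping.keys (b1 + b2). real (fact (Poly_Mapping.lookup c i)) / real (fact (Poly_Mapping.lookup c i - Poly_Mapping.lookup (b1 + b2) i)))"
    using keys_add[of b1 b2]
    by (subst (1 2 3) prod_fact_ratio_superset[of ?S])
       (auto simp: prod.distrib[symmetric] lookup_add lookup_minus diff_diff_add add.commute intro!: prod.cong)
  ultimately show ?thesis
    using le1 le2 le12 by (simp add: dmono_def dact_single_single mult_single)
qed

lemma dact_mult_single:
  "dact (Poly_Mapping.single b1 u * Poly_Mapping.single b2 w) (Poly_Mapping.single c v) =
   dact (Poly_Mapping.single b1 u) (dact (Poly_Mapping.single b2 w) (Poly_Mapping.single c v))"
proof -
  have "Poly_Mapping.single b1 u = Poly_Mapping.single 0 u * (Poly_Mapping.single b1 1 :: mpoly)"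
    by (simp add: mult_single)
  then have "dact (Poly_Mapping.single b1 u) (dact (Poly_Mapping.single b2 w) (Poly_Mapping.single c v))
      = Poly_Mapping.single 0 (u * (w * v)) * dmono (b1 + b2) c"
    by (simp only: dact_single_single dact_smult_left dact_smult_right dact_single_dmono smult_smult)
       (simp add: mult_ac)
  then show ?thesis
    by (simp add: mult_single dact_single_single mult_ac)
qed

lemma dact_mult: "dact (\<alpha> * \<beta>) g = dact \<alpha> (dact \<beta> g)"
proof (induction \<alpha> rule: mpoly_induct)
  case (single b1 u)
  show ?case
  proof (induction \<beta> rule: mpoly_induct)
    case (single b2 w)
    show ?case
      by (induction g rule: mpoly_induct) (simp_all add: dact_add_right dact_mult_single)
  qed (simp_all add: dact_add_right dact_add_left distrib_left)
qed (simp_all add: dact_add_left distrib_right)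

lemma dact_one[simp]: "dact 1 g = g"
proof (induction g rule: mpoly_induct)
  case (single c v)
  have "dmono 0 c = Poly_Mapping.single c 1"
    by (simp add: dmono_def)
  then show ?case
    by (simp add: dact_single_single mult_single flip: single_one del: single_one)
qed (simp_all add: dact_add_right)

lemma dact_mult_commute: "dact \<alpha> (dact \<beta> g) = dact \<beta> (dact \<alpha> g)"
  by (metis dact_mult mult.commute)

definition eval_monom :: "(nat \<Rightarrow> real) \<Rightarrow> (nat \<Rightarrow>\<^sub>0 nat) \<Rightarrow> real" where
  "eval_monom a g = (\<Prod>i\<in>Poly_Mapping.keys g. a i ^ Poly_Mapping.lookup g i)"

lemma eval_monom_superset:
  "finite S \<Longrightarrow> Poly_Mapping.keys g \<subseteq> S \<Longrightarrow> eval_monom a g = (\<Prod>i\<in>S. a i ^ Poly_Mapping.lookup g i)"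
  unfolding eval_monom_def by (rule prod.mono_neutral_left) (auto simp: in_keys_iff)

lemma eval_monom_add: "eval_monom a (g + h) = eval_monom a g * eval_monom a h"
  using keys_add[of g h]
  by (subst (1 2 3) eval_monom_superset[of "Poly_Mapping.keys g \<union> Poly_Mapping.keys h"])
     (auto simp: lookup_add power_add prod.distrib)

lemma eval_monom_zero[simp]: "eval_monom a 0 = 1"
  by (simp add: eval_monom_def)

lemma eval_monom_single: "eval_monom a (Poly_Mapping.single i 1) = a i"
  by (simp add: eval_monom_def)

lemma eval_mp_eq_sum_eval_monom:
  "eval_mp a p = (\<Sum>g\<in>Poly_Mapping.keys p. Poly_Mapping.lookup p g * eval_monom a g)"
  by (simp add: eval_mp_def eval_monom_def)

lemma eval_mp_superset:
  "finite C \<Longrightarrow> Poly_Mapping.keys p \<subseteq> C \<Longrightarrow> eval_mp a p = (\<Sum>g\<in>C. Poly_Mapping.lookup p g * eval_monom a g)"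
  unfolding eval_mp_eq_sum_eval_monom by (rule sum.mono_neutral_left) (auto simp: in_keys_iff)

lemma eval_mp_zero[simp]: "eval_mp a 0 = 0"
  by (simp add: eval_mp_def)

lemma eval_mp_single[simp]: "eval_mp a (Poly_Mapping.single c v) = v * eval_monom a c"
  by (subst eval_mp_superset[of "{c}"]) auto

lemma eval_mp_add: "eval_mp a (p + q) = eval_mp a p + eval_mp a q"
  using keys_add[of p q]
  by (subst (1 2 3) eval_mp_superset[of "Poly_Mapping.keys p \<union> Poly_Mapping.keys q"])
     (auto simp: lookup_add distrib_right sum.distrib)

lemma eval_mp_smult: "eval_mp a (Poly_Mapping.single 0 r * p) = r * eval_mp a p"
  by (subst (1 2) eval_mp_superset[of "Poly_Mapping.keys p"])
     (auto simp: lookup_smult in_keys_iff sum_distrib_left mult.assoc)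

lemma eval_mp_mult: "eval_mp a (p * q) = eval_mp a p * eval_mp a q"
proof (induction p rule: mpoly_induct)
  case (single c v)
  show ?case
    by (induction q rule: mpoly_induct) (simp_all add: mult_single eval_monom_add eval_mp_add distrib_left)
qed (simp_all add: distrib_right eval_mp_add)

lemma eval_mp_sum: "eval_mp a (\<Sum>i\<in>I. A i) = (\<Sum>i\<in>I. eval_mp a (A i))"
  by (induction I rule: infinite_finite_induct) (auto simp: eval_mp_add)

lemma eval_mp_at_zero: "eval_mp (\<lambda>_. 0) p = Poly_Mapping.lookup p 0"
proof -
  have monom: "eval_monom (\<lambda>_. 0) g = (if g = 0 then 1 else 0)" for g
  proof (cases "g = 0")
    case False
    then obtain i where "i \<in> Poly_Mapping.keys g" by (metis keys_eq_empty equals0I)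
    then show ?thesis
      unfolding eval_monom_def using False by (intro prod_zero[THEN trans]) (auto simp: in_keys_iff)
  qed (simp add: eval_monom_def)
  show ?thesis
    by (subst eval_mp_superset[of "insert 0 (Poly_Mapping.keys p)"]) (auto simp: monom if_distrib cong: if_cong)
qed

lemma mdeg_superset: "finite S \<Longrightarrow> Poly_Mapping.keys m \<subseteq> S \<Longrightarrow> mdeg m = (\<Sum>i\<in>S. Poly_Mapping.lookup m i)"
  unfolding mdeg_def by (rule sum.mono_neutral_left) (auto simp: in_keys_iff)

lemma mdeg_add: "mdeg (g + h) = mdeg g + mdeg h"
  using keys_add[of g h]
  by (subst (1 2 3) mdeg_superset[of "Poly_Mapping.keys g \<union> Poly_Mapping.keys h"]) (auto simp: lookup_add sum.distrib)

lemma mdeg_single: "mdeg (Poly_Mapping.single i j) = j"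
  by (subst mdeg_superset[of "{i}"]) auto

lemma mdeg_diff:
  assumes "\<forall>i. Poly_Mapping.lookup b i \<le> Poly_Mapping.lookup c i"
  shows "mdeg (c - b) = mdeg c - mdeg b"
proof -
  have "(c - b) + b = c"
    by (rule poly_mapping_eqI) (simp add: lookup_add lookup_minus assms)
  then show ?thesis by (metis mdeg_add add_diff_cancel_right')
qed

lemma keys_dact:
  assumes "m \<in> Poly_Mapping.keys (dact \<alpha> g)"
  obtains b c where "b \<in> Poly_Mapping.keys \<alpha>" "c \<in> Poly_Mapping.keys g"
    "\<forall>i. Poly_Mapping.lookup b i \<le> Poly_Mapping.lookup c i" "m = c - b"
proof -
  obtain b c where "b \<in> Poly_Mapping.keys \<alpha>" "c \<in> Poly_Mapping.keys g"
    "m \<in> Poly_Mapping.keys (Poly_Mapping.single 0 (Poly_Mapping.lookup \<alpha> b * Poly_Mapping.lookup g c) * dmono b c)"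
    using assms unfolding dact_def by (blast dest: keys_sum[THEN subsetD])
  then have "m \<in> Poly_Mapping.keys (dmono b c)"
    using keys_smult by blast
  then show thesis
    using that \<open>b \<in> Poly_Mapping.keys \<alpha>\<close> \<open>c \<in> Poly_Mapping.keys g\<close>
    by (auto simp: dmono_def split: if_splits)
qed

lemma homog_smult: "homog d p \<Longrightarrow> homog d (Poly_Mapping.single 0 r * p)"
  unfolding homog_def using keys_smult[of r p] by blast

lemma homog_sum: "(\<And>i. i \<in> I \<Longrightarrow> homog d (A i)) \<Longrightarrow> homog d (\<Sum>i\<in>I. A i)"
  unfolding homog_def using keys_sum[of A I] by blast

lemma homog_single: "homog (mdeg c) (Poly_Mapping.single c v)"
  unfolding homog_def by simp

lemma homog_mult:
  assumes "homog a p" "homog b q"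
  shows "homog (a + b) (p * q)"
  unfolding homog_def
proof
  fix m assume "m \<in> Poly_Mapping.keys (p * q)"
  then obtain x y where "x \<in> Poly_Mapping.keys p" "y \<in> Poly_Mapping.keys q" "m = x + y"
    using keys_mult[of p q] by blast
  then show "mdeg m = a + b" using assms unfolding homog_def by (simp add: mdeg_add)
qed

lemma homog_power: "homog a p \<Longrightarrow> homog (j * a) (p ^ j)"
proof (induction j)
  case 0
  then show ?case by (simp add: homog_def mdeg_def)
next
  case (Suc j)
  then show ?case using homog_mult[of a p "j * a" "p ^ j"] by simp
qed

lemma homog_dact:
  assumes "homog a \<alpha>" "homog b g"
  shows "homog (b - a) (dact \<alpha> g)"
  unfolding homog_def
proof
  fix m assume "m \<in> Poly_Mapping.keys (dact \<alpha> g)"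
  then obtain b' c where "b' \<in> Poly_Mapping.keys \<alpha>" "c \<in> Poly_Mapping.keys g"
    "\<forall>i. Poly_Mapping.lookup b' i \<le> Poly_Mapping.lookup c i" "m = c - b'"
    by (rule keys_dact)
  then show "mdeg m = b - a" using assms mdeg_diff unfolding homog_def by simp
qed

lemma homog_zero_eq_const:
  assumes "homog 0 g"
  shows "g = Poly_Mapping.single 0 (eval_mp a g)"
proof -
  have "m = 0" if "m \<in> Poly_Mapping.keys g" for m
  proof -
    have "mdeg m = 0" using assms that by (simp add: homog_def)
    then have "\<forall>i\<in>Poly_Mapping.keys m. Poly_Mapping.lookup m i = 0"
      unfolding mdeg_def by (simp add: sum_eq_0_iff)
    then show "m = 0" by (metis in_keys_iff lookup_zero poly_mapping_eqI)
  qed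
  then have keys: "Poly_Mapping.keys g \<subseteq> {0}" by blast
  then have "eval_mp a g = Poly_Mapping.lookup g 0"
    by (subst eval_mp_superset[of "{0}"]) (auto simp: eval_monom_def)
  moreover have "g = Poly_Mapping.single 0 (Poly_Mapping.lookup g 0)"
    using keys by (intro poly_mapping_eqI) (auto simp: lookup_single when_def in_keys_iff)
  ultimately show ?thesis by simp
qed

lemma in_vars_dact:
  assumes "in_vars n g"
  shows "in_vars n (dact \<alpha> g)"
  unfolding in_vars_def
proof
  fix m assume "m \<in> Poly_Mapping.keys (dact \<alpha> g)"
  then obtain b c where "c \<in> Poly_Mapping.keys g" "m = c - b"
    by (rule keys_dact)
  moreover have "Poly_Mapping.keys (c - b) \<subseteq> Poly_Mapping.keys c"
    by (auto simp: in_keys_iff lookup_minus)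
  ultimately show "Poly_Mapping.keys m \<subseteq> {..<n}" using assms unfolding in_vars_def by blast
qed

section \<open>Coefficients as derivatives\<close>

lemma lookup_dmono_zero:
  "Poly_Mapping.lookup (dmono c c') 0 = (if c = c' then (\<Prod>i\<in>Poly_Mapping.keys c. real (fact (Poly_Mapping.lookup c i))) else 0)"
proof (cases "\<forall>i. Poly_Mapping.lookup c i \<le> Poly_Mapping.lookup c' i")
  case True
  have "c' - c = 0 \<longleftrightarrow> c = c'"
  proof
    assume "c' - c = 0"
    then have "\<forall>i. Poly_Mapping.lookup c' i - Poly_Mapping.lookup c i = 0"
      by (metis lookup_minus lookup_zero)
    then show "c = c'" using True by (intro poly_mapping_eqI) (metis diff_is_0_eq le_antisym)
  qed simp
  then show ?thesis using True by (auto simp: dmono_def lookup_single when_def)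
next
  case False
  then show ?thesis by (auto simp: dmono_not_le)
qed

lemma lookup_dact_single_zero:
  "Poly_Mapping.lookup (dact (Poly_Mapping.single c 1) g) 0
     = Poly_Mapping.lookup g c * (\<Prod>i\<in>Poly_Mapping.keys c. real (fact (Poly_Mapping.lookup c i)))"
  by (subst dact_eq_sum_superset[where B="{c}" and C="insert c (Poly_Mapping.keys g)"])
     (auto simp: lookup_sum lookup_smult lookup_dmono_zero if_distrib cong: if_cong)

lemma homog_eq_zero_if_dact_zero:
  assumes "\<And>c. Poly_Mapping.keys c \<subseteq> {..<n} \<Longrightarrow> mdeg c = k \<Longrightarrow> dact (Poly_Mapping.single c 1) g = 0"
    and "homog k g" and "in_vars n g"
  shows "g = 0"
proof (rule poly_mapping_eqI)
  fix c
  show "Poly_Mapping.lookup g c = Poly_Mapping.lookup 0 c"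
  proof (cases "c \<in> Poly_Mapping.keys g")
    case True
    then have "dact (Poly_Mapping.single c 1) g = 0"
      using assms unfolding homog_def in_vars_def by blast
    then have "Poly_Mapping.lookup g c * (\<Prod>i\<in>Poly_Mapping.keys c. real (fact (Poly_Mapping.lookup c i))) = 0"
      by (metis lookup_dact_single_zero lookup_zero)
    then show ?thesis by simp
  qed (simp add: in_keys_iff)
qed

section \<open>Powers of a linear form\<close>

definition linear_form :: "(nat \<Rightarrow> real) \<Rightarrow> nat \<Rightarrow> mpoly" where
  "linear_form a n = (\<Sum>i<n. Poly_Mapping.single (Poly_Mapping.single i 1) (a i))"

lemma homog_linear_form: "homog 1 (linear_form a n)"
  unfolding linear_form_def
  by (intro homog_sum) (metis homog_single mdeg_single)

lemma dmono_single_one: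
  "dmono (Poly_Mapping.single i 1) c = (if 1 \<le> Poly_Mapping.lookup c i
     then Poly_Mapping.single (c - Poly_Mapping.single i 1) (real (Poly_Mapping.lookup c i)) else 0)"
proof -
  have "(\<forall>j. Poly_Mapping.lookup (Poly_Mapping.single i (1::nat)) j \<le> Poly_Mapping.lookup c j) \<longleftrightarrow> 1 \<le> Poly_Mapping.lookup c i"
    by (auto simp: lookup_single when_def)
  moreover have "fact (Poly_Mapping.lookup c i) = Poly_Mapping.lookup c i * fact (Poly_Mapping.lookup c i - 1)"
    if "1 \<le> Poly_Mapping.lookup c i"
    using that by (simp add: fact_reduce)
  ultimately show ?thesis unfolding dmono_def by simp
qed

lemma eval_dmono_single_one:
  "a i * eval_mp a (dmono (Poly_Mapping.single i 1) c) = real (Poly_Mapping.lookup c i) * eval_monom a c"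
proof (cases "1 \<le> Poly_Mapping.lookup c i")
  case True
  have "(c - Poly_Mapping.single i 1) + Poly_Mapping.single i 1 = c"
    by (rule poly_mapping_eqI) (use True in \<open>auto simp: lookup_add lookup_minus lookup_single when_def\<close>)
  then have "eval_monom a c = eval_monom a (c - Poly_Mapping.single i 1) * a i"
    by (metis eval_monom_add eval_monom_single)
  then show ?thesis unfolding dmono_single_one if_P[OF True] eval_mp_single by simp
next
  case False
  then show ?thesis unfolding dmono_single_one if_not_P[OF False] by simp
qed

lemma eval_dact_linear_form_monom:
  assumes "Poly_Mapping.keys c \<subseteq> {..<n}"
  shows "eval_mp a (dact (linear_form a n) (Poly_Mapping.single c 1)) = real (mdeg c) * eval_monom a c"
proof -
  have "eval_mp a (dact (linear_form a n) (Poly_Mapping.single c 1))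
      = (\<Sum>i<n. a i * eval_mp a (dmono (Poly_Mapping.single i 1) c))"
    by (simp add: linear_form_def dact_sum_left dact_single_single eval_mp_sum eval_mp_smult)
  also have "\<dots> = (\<Sum>i<n. real (Poly_Mapping.lookup c i) * eval_monom a c)"
    by (rule sum.cong[OF refl], rule eval_dmono_single_one)
  also have "\<dots> = real (mdeg c) * eval_monom a c"
    by (simp add: mdeg_superset[OF _ assms] sum_distrib_right)
  finally show ?thesis .
qed

text \<open>Euler's identity, evaluated at the point defining the linear form.\<close>

lemma eval_dact_linear_form:
  assumes "in_vars n g" "homog e g"
  shows "eval_mp a (dact (linear_form a n) g) = real e * eval_mp a g"
proof -
  have "g = (\<Sum>c\<in>Poly_Mapping.keys g. Poly_Mapping.single 0 (Poly_Mapping.lookup g c) * Poly_Mapping.single c 1)"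
    by (subst mpoly_eq_sum_single) (simp add: mult_single)
  then have "eval_mp a (dact (linear_form a n) g)
      = (\<Sum>c\<in>Poly_Mapping.keys g. Poly_Mapping.lookup g c * eval_mp a (dact (linear_form a n) (Poly_Mapping.single c 1)))"
    by (metis (no_types, lifting) dact_smult_right dact_sum_right eval_mp_smult eval_mp_sum sum.cong)
  also have "\<dots> = (\<Sum>c\<in>Poly_Mapping.keys g. Poly_Mapping.lookup g c * (real e * eval_monom a c))"
    using assms by (intro sum.cong refl) (auto simp: in_vars_def homog_def eval_dact_linear_form_monom)
  also have "\<dots> = real e * eval_mp a g"
    by (simp add: eval_mp_eq_sum_eval_monom sum_distrib_left mult_ac)
  finally show ?thesis .
qed

lemma dact_linear_form_power:
  assumes "in_vars n g" "homog e g"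
  shows "dact (linear_form a n ^ e) g = Poly_Mapping.single 0 (fact e * eval_mp a g)"
  using assms
proof (induction e arbitrary: g)
  case 0
  then show ?case using homog_zero_eq_const[of g a] by simp
next
  case (Suc e)
  have "homog e (dact (linear_form a n) g)"
    using homog_dact[OF homog_linear_form Suc.prems(2)] by simp
  moreover have "in_vars n (dact (linear_form a n) g)"
    using in_vars_dact Suc.prems(1) by blast
  ultimately have "dact (linear_form a n ^ Suc e) g = Poly_Mapping.single 0 (fact e * eval_mp a (dact (linear_form a n) g))"
    using Suc.IH by (simp only: power_Suc2 dact_mult)
  then show ?case
    using eval_dact_linear_form[OF Suc.prems] by (simp add: algebra_simps)
qed

section \<open>Polynomials vanishing everywhere\<close>

lemma has_real_derivative_eval_monom:
  "((\<lambda>s. eval_monom (a(i:=s)) c) has_real_derivative eval_mp (a(i:=t)) (dmono (Poly_Mapping.single i 1) c)) (at t)"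
proof (cases "1 \<le> Poly_Mapping.lookup c i")
  case True
  then have ik: "i \<in> Poly_Mapping.keys c" by (simp add: in_keys_iff)
  define R where "R = (\<Prod>j\<in>Poly_Mapping.keys c - {i}. a j ^ Poly_Mapping.lookup c j)"
  define k where "k = Poly_Mapping.lookup c i"
  have f: "eval_monom (a(i:=s)) c = s ^ k * R" for s
    unfolding eval_monom_def R_def k_def
    by (subst prod.remove[OF finite_keys ik]) (auto intro!: prod.cong)
  have kc: "Poly_Mapping.keys (c - Poly_Mapping.single i 1) \<subseteq> Poly_Mapping.keys c"
    by (auto simp: in_keys_iff lookup_minus)
  have g: "eval_monom (a(i:=t)) (c - Poly_Mapping.single i 1) = t ^ (k - 1) * R"
    unfolding R_def k_def
    by (subst eval_monom_superset[OF finite_keys kc], subst prod.remove[OF finite_keys ik])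
       (auto simp: lookup_minus lookup_single when_def intro!: prod.cong)
  have e: "eval_mp (a(i:=t)) (dmono (Poly_Mapping.single i 1) c) = real k * t ^ (k - 1) * R"
    unfolding dmono_single_one if_P[OF True] eval_mp_single g k_def by simp
  have "((\<lambda>s. s ^ k * R) has_real_derivative real k * t ^ (k - 1) * R) (at t)"
    using DERIV_pow[of k t UNIV] by (intro DERIV_cmult_right) simp
  then show ?thesis unfolding f e .
next
  case False
  then have "i \<notin> Poly_Mapping.keys c" by (simp add: in_keys_iff)
  then have "eval_monom (a(i:=s)) c = eval_monom a c" for s
    unfolding eval_monom_def by (intro prod.cong) auto
  then show ?thesis unfolding dmono_single_one if_not_P[OF False] by simp
qed

lemma has_real_derivative_eval_mp:
  "((\<lambda>s. eval_mp (a(i:=s)) P) has_real_derivative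
     eval_mp (a(i:=t)) (dact (Poly_Mapping.single (Poly_Mapping.single i 1) 1) P)) (at t)"
proof -
  have "dact (Poly_Mapping.single (Poly_Mapping.single i 1) 1) P
      = (\<Sum>c\<in>Poly_Mapping.keys P. Poly_Mapping.single 0 (Poly_Mapping.lookup P c) * dmono (Poly_Mapping.single i 1) c)"
    by (subst dact_eq_sum_superset[where B="{Poly_Mapping.single i 1}" and C="Poly_Mapping.keys P"]) auto
  moreover have "((\<lambda>s. \<Sum>c\<in>Poly_Mapping.keys P. Poly_Mapping.lookup P c * eval_monom (a(i:=s)) c) has_real_derivative
      (\<Sum>c\<in>Poly_Mapping.keys P. Poly_Mapping.lookup P c * eval_mp (a(i:=t)) (dmono (Poly_Mapping.single i 1) c))) (at t)"
    by (intro DERIV_sum DERIV_cmult has_real_derivative_eval_monom)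
  ultimately show ?thesis
    by (simp add: eval_mp_eq_sum_eval_monom[symmetric] eval_mp_sum eval_mp_smult)
qed

lemma eval_dact_single_eq_zero:
  assumes "\<forall>a. eval_mp a P = 0"
  shows "eval_mp a (dact (Poly_Mapping.single c 1) P) = 0"
  using assms
proof (induction "mdeg c" arbitrary: c P a rule: less_induct)
  case less
  show ?case
  proof (cases "c = 0")
    case True
    then show ?thesis using less.prems by simp
  next
    case False
    then obtain i where "i \<in> Poly_Mapping.keys c" by (metis keys_eq_empty equals0I)
    define c' where "c' = c - Poly_Mapping.single i 1"
    have c: "Poly_Mapping.single i 1 + c' = c" unfolding c'_def
      by (rule poly_mapping_eqI)
         (use \<open>i \<in> Poly_Mapping.keys c\<close> in \<open>auto simp: lookup_add lookup_minus lookup_single when_def in_keys_iff\<close>)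
    then have "mdeg c' < mdeg c" by (metis mdeg_add mdeg_single less_add_one add.commute)
    then have "(\<lambda>s. eval_mp (a(i:=s)) (dact (Poly_Mapping.single c' 1) P)) = (\<lambda>s. 0)"
      using less by blast
    \<comment> \<open>a function of one variable that vanishes identically has zero derivative\<close>
    then have "((\<lambda>s. 0) has_real_derivative
        eval_mp a (dact (Poly_Mapping.single (Poly_Mapping.single i 1) 1) (dact (Poly_Mapping.single c' 1) P))) (at (a i))"
      using has_real_derivative_eval_mp[of a i "dact (Poly_Mapping.single c' 1) P" "a i"] by simp
    then have "eval_mp a (dact (Poly_Mapping.single (Poly_Mapping.single i 1) 1 * Poly_Mapping.single c' 1) P) = 0"
      by (metis DERIV_const DERIV_unique dact_mult)
    then show ?thesis using c by (simp add: mult_single)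
  qed
qed

lemma mpoly_eq_zero_if_eval_eq_zero:
  assumes "\<forall>a. eval_mp a P = 0"
  shows "P = 0"
proof (rule poly_mapping_eqI)
  fix c
  have "Poly_Mapping.lookup P c * (\<Prod>i\<in>Poly_Mapping.keys c. real (fact (Poly_Mapping.lookup c i))) = 0"
    using eval_dact_single_eq_zero[OF assms, of "\<lambda>_. 0" c] by (metis lookup_dact_single_zero eval_mp_at_zero)
  then show "Poly_Mapping.lookup P c = Poly_Mapping.lookup 0 c" by simp
qed

section \<open>The Hessian kernel and the Lefschetz multiplication\<close>

lemma eval_dact_hessian_kernel:
  assumes "(\<Sum>j<m. dact (\<alpha> i * \<alpha> j) f * F j) = 0"
  shows "eval_mp a (dact (\<alpha> i * (\<Sum>j<m. Poly_Mapping.single 0 (eval_mp a (F j)) * \<alpha> j)) f) = 0"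
proof -
  have "eval_mp a (dact (\<alpha> i * (\<Sum>j<m. Poly_Mapping.single 0 (eval_mp a (F j)) * \<alpha> j)) f)
      = eval_mp a (\<Sum>j<m. dact (\<alpha> i * \<alpha> j) f * F j)"
    by (simp add: sum_distrib_left mult.left_commute[of "\<alpha> i"] dact_sum_left dact_smult_left
        eval_mp_sum eval_mp_smult eval_mp_mult mult.commute[of "eval_mp a (F _)"])
  then show ?thesis using assms by simp
qed

lemma eval_dact_mult_eq_zero_if_span:
  assumes span: "dact (\<beta> - (\<Sum>i<m. Poly_Mapping.single 0 (c i) * \<alpha> i)) f = 0"
    and kernel: "\<And>i. i < m \<Longrightarrow> eval_mp a (dact (\<alpha> i * \<xi>) f) = 0"
  shows "eval_mp a (dact (\<beta> * \<xi>) f) = 0"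
proof -
  have "dact \<beta> f = (\<Sum>i<m. Poly_Mapping.single 0 (c i) * dact (\<alpha> i) f)"
    using span by (simp add: dact_diff_left dact_sum_left dact_smult_left)
  then have "dact (\<beta> * \<xi>) f = (\<Sum>i<m. Poly_Mapping.single 0 (c i) * dact \<xi> (dact (\<alpha> i) f))"
    by (simp add: dact_mult dact_mult_commute[of \<beta>] dact_sum_right dact_smult_right)
  also have "\<dots> = (\<Sum>i<m. Poly_Mapping.single 0 (c i) * dact (\<alpha> i * \<xi>) f)"
    by (simp only: dact_mult_commute[of \<xi>] dact_mult)
  finally show ?thesis
    using kernel by (simp add: eval_mp_sum eval_mp_smult)
qed

lemma dact_mult_linear_form_power_eq_zero:
  assumes f: "in_vars n f" "homog d f" and k: "2 * k \<le> d" and \<xi>: "homog k \<xi>"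
    and kernel: "\<And>\<beta>. in_vars n \<beta> \<Longrightarrow> homog k \<beta> \<Longrightarrow> eval_mp a (dact (\<beta> * \<xi>) f) = 0"
  shows "dact (\<xi> * linear_form a n ^ (d - 2 * k)) f = 0"
proof (rule homog_eq_zero_if_dact_zero)
  let ?e = "d - 2 * k"
  have "homog (k + ?e) (\<xi> * linear_form a n ^ ?e)"
    using homog_mult[OF \<xi> homog_power[OF homog_linear_form]] by simp
  then show "homog k (dact (\<xi> * linear_form a n ^ ?e) f)"
    using homog_dact[OF _ f(2)] k by fastforce
  show "in_vars n (dact (\<xi> * linear_form a n ^ ?e) f)"
    by (rule in_vars_dact[OF f(1)])
  fix c :: "nat \<Rightarrow>\<^sub>0 nat" assume c: "Poly_Mapping.keys c \<subseteq> {..<n}" "mdeg c = k"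
  define \<beta> :: mpoly where "\<beta> = Poly_Mapping.single c 1"
  have \<beta>: "in_vars n \<beta>" "homog k \<beta>"
    using c homog_single[of c 1] by (auto simp: \<beta>_def in_vars_def)
  have "homog ?e (dact (\<beta> * \<xi>) f)"
    using homog_dact[OF homog_mult[OF \<beta>(2) \<xi>] f(2)] k by (simp add: diff_diff_add mult_2)
  then have "dact (linear_form a n ^ ?e) (dact (\<beta> * \<xi>) f)
      = Poly_Mapping.single 0 (fact ?e * eval_mp a (dact (\<beta> * \<xi>) f))"
    by (rule dact_linear_form_power[OF in_vars_dact[OF f(1)]])
  then have "dact (linear_form a n ^ ?e) (dact (\<beta> * \<xi>) f) = 0"
    using kernel[OF \<beta>] by simp
  then show "dact (Poly_Mapping.single c 1) (dact (\<xi> * linear_form a n ^ ?e) f) = 0"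
    by (simp add: \<beta>_def dact_mult[symmetric] mult_ac)
qed

lemma eval_dact_eq_zero_if_dact_mult_linear_form_power:
  assumes f: "in_vars n f" "homog d f" and k: "2 * k \<le> d" and \<xi>: "homog k \<xi>"
    and "dact (\<xi> * linear_form a n ^ (d - 2 * k)) f = 0"
  shows "eval_mp a (dact \<xi> f) = 0"
proof -
  have "Poly_Mapping.single 0 (fact (d - k) * eval_mp a (dact \<xi> f))
      = dact (linear_form a n ^ (d - k)) (dact \<xi> f)"
    by (rule dact_linear_form_power[symmetric, OF in_vars_dact[OF f(1)] homog_dact[OF \<xi> f(2)]])
  also have "\<dots> = dact (linear_form a n ^ k) (dact (\<xi> * linear_form a n ^ (d - 2 * k)) f)"
    using k by (simp add: dact_mult[symmetric] mult_ac power_add[symmetric])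
  also have "\<dots> = 0"
    using assms by simp
  finally show ?thesis
    by (metis lookup_single_eq lookup_zero mult_eq_0_iff fact_nonzero of_nat_eq_0_iff)
qed

theorem mainTheorem1:
  fixes n d k m :: nat
    and f :: mpoly
    and \<alpha> :: "nat \<Rightarrow> mpoly"
    and F :: "nat \<Rightarrow> mpoly"
  assumes f_vars: "in_vars n f"
    and f_homog: "homog d f"
    and k_le: "k \<le> d div 2"
    and \<alpha>_vars: "\<forall>i<m. in_vars n (\<alpha> i)"
    and \<alpha>_homog: "\<forall>i<m. homog k (\<alpha> i)"
    and \<alpha>_indep: "\<forall>c :: nat \<Rightarrow> real.
        dact (\<Sum>i<m. Poly_Mapping.single 0 (c i) * \<alpha> i) f = 0 \<longrightarrow> (\<forall>i<m. c i = 0)"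
    and \<alpha>_span: "\<forall>\<beta>. in_vars n \<beta> \<and> homog k \<beta> \<longrightarrow>
        (\<exists>c :: nat \<Rightarrow> real. dact (\<beta> - (\<Sum>i<m. Poly_Mapping.single 0 (c i) * \<alpha> i)) f = 0)"
    and F_vars: "\<forall>j<m. in_vars n (F j)"
    and hess: "\<forall>i<m. (\<Sum>j<m. dact (\<alpha> i * \<alpha> j) f * F j) = 0"
  shows "(\<forall>a :: nat \<Rightarrow> real.
           let l = (\<Sum>i<n. Poly_Mapping.single (Poly_Mapping.single i 1) (a i)) ;
               \<xi> = (\<Sum>i<m. Poly_Mapping.single 0 (eval_mp a (F i)) * \<alpha> i)
           in dact (\<xi> * l ^ (d - 2 * k)) f = 0)
         \<and> (\<Sum>i<m. F i * dact (\<alpha> i) f) = 0"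
proof -
  define \<xi> where "\<xi> a = (\<Sum>i<m. Poly_Mapping.single 0 (eval_mp a (F i)) * \<alpha> i)" for a
  have k: "2 * k \<le> d" using k_le by presburger
  have \<xi>_homog: "homog k (\<xi> a)" for a
    unfolding \<xi>_def using \<alpha>_homog by (intro homog_sum homog_smult) auto
  have part1: "dact (\<xi> a * linear_form a n ^ (d - 2 * k)) f = 0" for a
  proof (rule dact_mult_linear_form_power_eq_zero[OF f_vars f_homog k \<xi>_homog])
    fix \<beta> assume "in_vars n \<beta>" "homog k \<beta>"
    then obtain c where "dact (\<beta> - (\<Sum>i<m. Poly_Mapping.single 0 (c i) * \<alpha> i)) f = 0"
      using \<alpha>_span by blast
    then show "eval_mp a (dact (\<beta> * \<xi> a) f) = 0"
      by (rule eval_dact_mult_eq_zero_if_span) (simp add: \<xi>_def hess eval_dact_hessian_kernel)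
  qed
  have "eval_mp a (\<Sum>i<m. F i * dact (\<alpha> i) f) = eval_mp a (dact (\<xi> a) f)" for a
    by (simp add: \<xi>_def eval_mp_sum eval_mp_mult dact_sum_left dact_smult_left eval_mp_smult)
  then have part2: "(\<Sum>i<m. F i * dact (\<alpha> i) f) = 0"
    using eval_dact_eq_zero_if_dact_mult_linear_form_power[OF f_vars f_homog k \<xi>_homog part1]
    by (intro mpoly_eq_zero_if_eval_eq_zero) simp
  show ?thesis
    using part1 part2 unfolding \<xi>_def linear_form_def Let_def by blast
qed

end
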